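(* Let $u_0\in H^1_0(\Omega)$. There exists $(y,f)\in L^2(Q_T)\times L^2(q_T)$ such that $(y,f)\in\mathcal{A}(s)$ for all $s\ge0$.
   Context: $\Omega=(0,1)$, $\omega\subset\subset\Omega$ a non-empty open set, $T>0$, $Q_T=\Omega\times(0,T)$, $q_T=\omega\times(0,T)$, $\Sigma_T=\partial\Omega\times(0,T)$. Fix $\widetilde\psi\in C^1(\overline\Omega)$ with $\widetilde\psi\in(0,1)$ in $\Omega$, $\widetilde\psi=0$ on $\partial\Omega$, $|\partial_x\widetilde\psi|>0$ on $\overline{\Omega\setminus\omega}$; $\widehat\psi=\widetilde\psi+6$; fix $0<T_1<\min(1/4,3T/8)$ and $\lambda=\lambda_0\ge1$ fixed. For $s$, $\mu=s\lambda^2e^{2\lambda}$, $\theta\in C^2([0,T))$ with $\theta(t)=1+(1-4t/T)^\mu$ on $[0,T/4]$, $\theta=1$ on $[T/4,T-2T_1]$, $\theta$ increasing on $[T-2T_1,T-T_1]$, $\theta(t)=1/(T-t)$ on $[T-T_1,T)$; $\varphi=\theta(t)(\lambda e^{12\lambda}-e^{\lambda\widehat\psi(x)})$, $\xi=\theta(t)e^{\lambda\widehat\psi(x)}$, $\rho(s)=e^{s\varphi}$, $\rho_0(s)=\xi^{-3/2}\rho(s)$. $\mathcal{A}(s)$ denotes the set of pairs $(y,f)$ with $\rho(s)y\in L^2(Q_T)$, $\rho_0(s)f\in L^2(q_T)$, $\rho_0(s)(\partial_ty-\partial_{xx}y)\in L^2(Q_T)$, $y(\cdot,0)=u_0$ in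 $\Omega$ and $y=0$ on $\Sigma_T$. *)

theory Defs
  imports "HOL-Analysis.Analysis"
begin

definition QT :: "real \<Rightarrow> (real \<times> real) set" where
  "QT T = {0<..<1} \<times> {0<..<T}"

definition qT :: "real set \<Rightarrow> real \<Rightarrow> (real \<times> real) set" where
  "qT \<omega> T = \<omega> \<times> {0<..<T}"

definition L2_on :: "'a::euclidean_space set \<Rightarrow> ('a \<Rightarrow> real) \<Rightarrow> bool" where
  "L2_on A g \<longleftrightarrow> (\<lambda>z. indicator A z * g z) \<in> borel_measurable lebesgue
      \<and> integrable lebesgue (\<lambda>z. indicator A z * (g z)^2)"

text \<open>H^1_0(0,1): a.e. equal to an absolutely continuous function with L^2 derivative
  vanishing at both endpoints.\<close>
definition H10 :: "(real \<Rightarrow> real) \<Rightarrow> bool" where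
  "H10 u \<longleftrightarrow> (\<exists>w v. L2_on {0<..<1} v
      \<and> (\<forall>x\<in>{0..1}. w x = (LINT s:{0..x}|lebesgue. v s))
      \<and> w 1 = 0
      \<and> (AE x in lebesgue. x \<in> {0<..<1} \<longrightarrow> u x = w x))"

definition test_fun :: "(real \<times> real) set \<Rightarrow> (real \<times> real \<Rightarrow> real) \<Rightarrow> (real \<times> real \<Rightarrow> real)
    \<Rightarrow> (real \<times> real \<Rightarrow> real) \<Rightarrow> (real \<times> real \<Rightarrow> real) \<Rightarrow> bool" where
  "test_fun Q \<phi> \<phi>t \<phi>x \<phi>xx \<longleftrightarrow>
     continuous_on UNIV \<phi> \<and> continuous_on UNIV \<phi>t \<and> continuous_on UNIV \<phi>x
     \<and> continuous_on UNIV \<phi>xx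
     \<and> (\<forall>x t. ((\<lambda>t'. \<phi> (x, t')) has_real_derivative \<phi>t (x, t)) (at t))
     \<and> (\<forall>x t. ((\<lambda>x'. \<phi> (x', t)) has_real_derivative \<phi>x (x, t)) (at x))
     \<and> (\<forall>x t. ((\<lambda>x'. \<phi>x (x', t)) has_real_derivative \<phi>xx (x, t)) (at x))
     \<and> (\<exists>K. compact K \<and> K \<subseteq> Q \<and> (\<forall>z. z \<notin> K \<longrightarrow> \<phi> z = 0))"

text \<open>\<partial>_t y - \<partial>_xx y = g in the sense of distributions on Q.\<close>
definition heat_weak :: "(real \<times> real) set \<Rightarrow> (real \<times> real \<Rightarrow> real) \<Rightarrow> (real \<times> real \<Rightarrow> real) \<Rightarrow> bool" where
  "heat_weak Q y g \<longleftrightarrow> (\<forall>\<phi> \<phi>t \<phi>x \<phi>xx. test_fun Q \<phi> \<phi>t \<phi>x \<phi>xx \<longrightarrow>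
      (LINT z|lebesgue. indicator Q z * y z * (- \<phi>t z - \<phi>xx z))
        = (LINT z|lebesgue. indicator Q z * g z * \<phi> z))"

definition psi_hat :: "(real \<Rightarrow> real) \<Rightarrow> real \<Rightarrow> real" where
  "psi_hat \<psi> x = \<psi> x + 6"

definition mu :: "real \<Rightarrow> real \<Rightarrow> real" where
  "mu lam s = s * lam^2 * exp (2 * lam)"

definition theta_adm :: "real \<Rightarrow> real \<Rightarrow> real \<Rightarrow> real \<Rightarrow> (real \<Rightarrow> real) \<Rightarrow> bool" where
  "theta_adm T T1 lam s \<theta> \<longleftrightarrow>
     (\<exists>\<theta>' \<theta>''. (\<forall>t\<in>{0..<T}. (\<theta> has_real_derivative \<theta>' t) (at t within {0..<T})
                 \<and> (\<theta>' has_real_derivative \<theta>'' t) (at t within {0..<T}))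
               \<and> continuous_on {0..<T} \<theta>'')
     \<and> (\<forall>t\<in>{0..T/4}. \<theta> t = 1 + (1 - 4 * t / T) powr (mu lam s))
     \<and> (\<forall>t\<in>{T/4..T - 2*T1}. \<theta> t = 1)
     \<and> mono_on {T - 2*T1..T - T1} \<theta>
     \<and> (\<forall>t\<in>{T - T1..<T}. \<theta> t = 1 / (T - t))"

definition varphi :: "real \<Rightarrow> (real \<Rightarrow> real) \<Rightarrow> (real \<Rightarrow> real) \<Rightarrow> real \<times> real \<Rightarrow> real" where
  "varphi lam \<psi> \<theta> z = \<theta> (snd z) * (lam * exp (12 * lam) - exp (lam * psi_hat \<psi> (fst z)))"

definition xi :: "real \<Rightarrow> (real \<Rightarrow> real) \<Rightarrow> (real \<Rightarrow> real) \<Rightarrow> real \<times> real \<Rightarrow> real" where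
  "xi lam \<psi> \<theta> z = \<theta> (snd z) * exp (lam * psi_hat \<psi> (fst z))"

definition rho :: "real \<Rightarrow> (real \<Rightarrow> real) \<Rightarrow> (real \<Rightarrow> real) \<Rightarrow> real \<Rightarrow> real \<times> real \<Rightarrow> real" where
  "rho lam \<psi> \<theta> s z = exp (s * varphi lam \<psi> \<theta> z)"

definition rho0 :: "real \<Rightarrow> (real \<Rightarrow> real) \<Rightarrow> (real \<Rightarrow> real) \<Rightarrow> real \<Rightarrow> real \<times> real \<Rightarrow> real" where
  "rho0 lam \<psi> \<theta> s z = xi lam \<psi> \<theta> z powr (-3/2) * rho lam \<psi> \<theta> s z"

definition adm_set :: "real set \<Rightarrow> real \<Rightarrow> real \<Rightarrow> (real \<Rightarrow> real) \<Rightarrow> (real \<Rightarrow> real) \<Rightarrow> real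
    \<Rightarrow> (real \<Rightarrow> real) \<Rightarrow> ((real \<times> real \<Rightarrow> real) \<times> (real \<times> real \<Rightarrow> real)) set" where
  "adm_set \<omega> T lam \<psi> \<theta> s u0 = {(y, f).
       L2_on (QT T) (\<lambda>z. rho lam \<psi> \<theta> s z * y z)
     \<and> L2_on (qT \<omega> T) (\<lambda>z. rho0 lam \<psi> \<theta> s z * f z)
     \<and> (\<exists>g. heat_weak (QT T) y g \<and> L2_on (QT T) (\<lambda>z. rho0 lam \<psi> \<theta> s z * g z))
     \<and> continuous_on ({0..1} \<times> {0..<T}) y
     \<and> (AE x in lebesgue. x \<in> {0<..<1} \<longrightarrow> y (x, 0) = u0 x)
     \<and> (\<forall>t\<in>{0<..<T}. y (0, t) = 0 \<and> y (1, t) = 0)}"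

definition psi_adm :: "real set \<Rightarrow> (real \<Rightarrow> real) \<Rightarrow> bool" where
  "psi_adm \<omega> \<psi> \<longleftrightarrow>
     (\<exists>\<psi>'. continuous_on {0..1} \<psi>'
        \<and> (\<forall>x\<in>{0..1}. (\<psi> has_real_derivative \<psi>' x) (at x within {0..1}))
        \<and> (\<forall>x\<in>closure ({0<..<1} - \<omega>). \<bar>\<psi>' x\<bar> > 0))
     \<and> (\<forall>x\<in>{0<..<1}. 0 < \<psi> x \<and> \<psi> x < 1)
     \<and> \<psi> 0 = 0 \<and> \<psi> 1 = 0"

end

theory Submission
  imports Defs "HOL-Probability.Distributions"
begin

(* No control is needed: f = 0 works for every s. Take a continuous representative w of u0,
   extend it to a bounded continuous function W on the line that is odd about 0 and about 1,
   and let Y be the heat flow of W on the whole line. By symmetry Y vanishes at x = 0 and x = 1,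
   it is continuous up to t = 0 with Y(x, 0) = W x, and it solves the heat equation in the sense
   of distributions because the heat kernel does (swap the integrals by Fubini). Multiplying Y by
   a C^1 cutoff in time that equals 1 at t = 0 and vanishes from t = T/4 on gives a function y
   with d_t y - d_xx y = (cutoff') Y. Since y and this source vanish long before the weights
   blow up at t = T, every weighted norm required by A(s) is the L^2 norm of a function that is
   continuous on the compact set [0,1] x [0,T/4], hence finite. *)

lemma continuous_on_compose_fst:
  "continuous_on A f \<Longrightarrow> S \<subseteq> A \<times> UNIV \<Longrightarrow> continuous_on S (\<lambda>p. f (fst p))"
  by (rule continuous_on_compose2[of A]) (auto intro: continuous_intros)

lemma continuous_on_compose_snd:
  "continuous_on B f \<Longrightarrow> S \<subseteq> UNIV \<times> B \<Longrightarrow> continuous_on S (\<lambda>p. f (snd p))"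
  by (rule continuous_on_compose2[of B]) (auto intro: continuous_intros)

lemma has_real_derivative_vanishing_outside_closed:
  fixes f :: "'a::topological_space \<Rightarrow> real" and \<gamma> :: "real \<Rightarrow> 'a"
  assumes "closed K" "\<And>z. z \<notin> K \<Longrightarrow> f z = 0" "continuous_on UNIV \<gamma>" "\<gamma> s \<notin> K"
    and "((\<lambda>s. f (\<gamma> s)) has_real_derivative D) (at s)"
  shows "D = 0"
proof -
  have "((\<lambda>s. f (\<gamma> s)) has_real_derivative 0) (at s)"
  proof (rule has_field_derivative_transform_within_open[OF DERIV_const])
    show "open (\<gamma> -` (- K))"
      using assms by (intro open_vimage) auto
  qed (use assms in auto)
  with assms(5) show ?thesis
    by (rule DERIV_unique)
qed

lemma integrable_vanishing_outside_compact:
  fixes f :: "'a::euclidean_space \<Rightarrow> real"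
  assumes "compact C" "continuous_on C f" "\<And>z. z \<notin> C \<Longrightarrow> f z = 0"
  shows "integrable lborel f" "integrable lebesgue f" "integral\<^sup>L lborel f = integral C f"
proof -
  have f_eq: "(\<lambda>z. indicator C z * f z) = f"
    using assms(3) by (auto simp: fun_eq_iff indicator_def)
  show int: "integrable lborel f"
    using borel_integrable_compact[OF assms(1,2)] by (simp add: f_eq)
  then show "integrable lebesgue f"
    by (subst integrable_completion) (auto dest: borel_measurable_integrable)
  show "integral\<^sup>L lborel f = integral C f"
    using set_borel_integral_eq_integral(2)[of C f] int
    by (simp add: set_integrable_def set_lebesgue_integral_def f_eq)
qed

lemma has_integral_box_time_derivative:
  fixes f F :: "real \<times> real \<Rightarrow> real"
  assumes "continuous_on (cbox (a, c) (b, d)) f" "c \<le> d"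
    and "\<And>x t. x \<in> {a..b} \<Longrightarrow> t \<in> {c..d} \<Longrightarrow> ((\<lambda>t. F (x, t)) has_real_derivative f (x, t)) (at t)"
    and "\<And>x. x \<in> {a..b} \<Longrightarrow> F (x, c) = 0 \<and> F (x, d) = 0"
  shows "(f has_integral 0) (cbox (a, c) (b, d))"
proof -
  have "integral {c..d} (\<lambda>t. f (x, t)) = 0" if x: "x \<in> {a..b}" for x
  proof -
    have "((\<lambda>t. f (x, t)) has_integral F (x, d) - F (x, c)) {c..d}"
      using assms(2,3) x
      by (intro fundamental_theorem_of_calculus)
         (auto simp: has_real_derivative_iff_has_vector_derivative[symmetric]
               intro: has_field_derivative_at_within)
    then show ?thesis
      using assms(4)[OF x] by (simp add: integral_unique)
  qed
  then have "integral {a..b} (\<lambda>x. integral {c..d} (\<lambda>t. f (x, t))) = integral {a..b} (\<lambda>x. 0)"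
    by (rule integral_cong)
  then show ?thesis
    using integral_prod_continuous[OF assms(1)] integrable_integral[OF integrable_continuous[OF assms(1)]]
    by (simp add: cbox_interval)
qed

lemma has_integral_box_space_derivative:
  fixes f F :: "real \<times> real \<Rightarrow> real"
  assumes "continuous_on (cbox (a, c) (b, d)) f" "a \<le> b"
    and "\<And>x t. x \<in> {a..b} \<Longrightarrow> t \<in> {c..d} \<Longrightarrow> ((\<lambda>x. F (x, t)) has_real_derivative f (x, t)) (at x)"
    and "\<And>t. t \<in> {c..d} \<Longrightarrow> F (a, t) = 0 \<and> F (b, t) = 0"
  shows "(f has_integral 0) (cbox (a, c) (b, d))"
proof -
  have "integral {a..b} (\<lambda>x. f (x, t)) = 0" if t: "t \<in> {c..d}" for t
  proof -
    have "((\<lambda>x. f (x, t)) has_integral F (b, t) - F (a, t)) {a..b}"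
      using assms(2,3) t
      by (intro fundamental_theorem_of_calculus)
         (auto simp: has_real_derivative_iff_has_vector_derivative[symmetric]
               intro: has_field_derivative_at_within)
    then show ?thesis
      using assms(4)[OF t] by (simp add: integral_unique)
  qed
  then have "integral {c..d} (\<lambda>t. integral {a..b} (\<lambda>x. f (x, t))) = integral {c..d} (\<lambda>t. 0)"
    by (rule integral_cong)
  then show ?thesis
    using integral_prod_continuous[OF assms(1)] integral_swap_continuous[of a c b d "\<lambda>x t. f (x, t)"]
      assms(1) integrable_integral[OF integrable_continuous[OF assms(1)]]
    by (simp add: cbox_interval)
qed

lemma L2_on_continuous_compact:
  fixes g :: "'a::euclidean_space \<Rightarrow> real"
  assumes A: "A \<in> sets borel" and C: "compact C" "continuous_on C g"
    and vanish: "\<And>z. z \<in> A \<Longrightarrow> z \<notin> C \<Longrightarrow> g z = 0"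
  shows "L2_on A g"
proof -
  have restrict: "indicator A z * g z = indicator A z * (indicator C z * g z)" for z
    using vanish[of z] by (auto simp: indicator_def)
  have "(\<lambda>z. indicator C z *\<^sub>R g z) \<in> borel_measurable borel"
    using C by (intro borel_measurable_continuous_on_indicator) (auto intro: borel_closed compact_imp_closed)
  then have measurable: "(\<lambda>z. indicator A z * g z) \<in> borel_measurable borel"
    unfolding restrict using A by simp
  have C_integrable: "integrable lborel (\<lambda>z. indicator C z *\<^sub>R (g z)\<^sup>2)"
    using C by (intro borel_integrable_compact continuous_intros)
  have "integrable lborel (\<lambda>z. indicator A z *\<^sub>R (indicator C z *\<^sub>R (g z)\<^sup>2))"
    by (rule integrable_mult_indicator[OF _ C_integrable]) (use A in simp)
  then have "integrable lborel (\<lambda>z. indicator A z * (g z)\<^sup>2)"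
    by (rule Bochner_Integration.integrable_cong[THEN iffD1, OF refl, rotated])
       (use vanish in \<open>auto simp: indicator_def\<close>)
  with measurable show ?thesis
    unfolding L2_on_def
    by (auto simp: integrable_completion dest: borel_measurable_integrable
             intro: measurable_completion)
qed

lemma L2_on_integrable:
  assumes "L2_on A v" "A \<in> lmeasurable"
  shows "integrable lebesgue (\<lambda>z. indicator A z * v z)"
proof (rule Bochner_Integration.integrable_bound)
  show "integrable lebesgue (\<lambda>z. indicator A z + indicator A z * (v z)\<^sup>2)"
    using assms unfolding L2_on_def
    by (intro Bochner_Integration.integrable_add) (auto simp: lmeasurable_iff_integrable)
  show "(\<lambda>z. indicator A z * v z) \<in> borel_measurable lebesgue"
    using assms(1) unfolding L2_on_def by simp
  have "\<bar>x\<bar> \<le> 1 + x\<^sup>2" for x :: real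
    using zero_le_power2[of "\<bar>x\<bar> - 1"] by (simp add: power2_eq_square algebra_simps)
  then show "AE z in lebesgue. norm (indicator A z * v z) \<le> norm (indicator A z + indicator A z * (v z)\<^sup>2)"
    by (auto simp: indicator_def)
qed

section \<open>Test functions\<close>

lemma test_fun_support:
  assumes "test_fun Q \<phi> \<phi>t \<phi>x \<phi>xx"
  obtains K where "compact K" "K \<subseteq> Q"
    "\<And>z. z \<notin> K \<Longrightarrow> \<phi> z = 0 \<and> \<phi>t z = 0 \<and> \<phi>x z = 0 \<and> \<phi>xx z = 0"
proof -
  obtain K where K: "compact K" "K \<subseteq> Q" and \<phi>0: "\<And>z. z \<notin> K \<Longrightarrow> \<phi> z = 0"
    using assms unfolding test_fun_def by blast
  have "closed K"
    using K(1) by (rule compact_imp_closed)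
  have along_x: "continuous_on UNIV (\<lambda>x. (x, t))" for t :: real
    by (intro continuous_intros)
  have along_t: "continuous_on UNIV (\<lambda>t. (x, t))" for x :: real
    by (intro continuous_intros)
  have d_t: "\<And>x t. ((\<lambda>t'. \<phi> (x, t')) has_real_derivative \<phi>t (x, t)) (at t)"
    and d_x: "\<And>t x. ((\<lambda>x'. \<phi> (x', t)) has_real_derivative \<phi>x (x, t)) (at x)"
    and d_xx: "\<And>t x. ((\<lambda>x'. \<phi>x (x', t)) has_real_derivative \<phi>xx (x, t)) (at x)"
    using assms unfolding test_fun_def by auto
  have \<phi>x0: "\<phi>x z = 0" if "z \<notin> K" for z
    by (rule has_real_derivative_vanishing_outside_closed[where f = \<phi> and s = "fst z",
          OF \<open>closed K\<close> \<phi>0 along_x[of "snd z"]])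
       (use that d_x[of "snd z" "fst z"] in auto)
  have "\<phi>xx z = 0" if "z \<notin> K" for z
    by (rule has_real_derivative_vanishing_outside_closed[where f = \<phi>x and s = "fst z",
          OF \<open>closed K\<close> \<phi>x0 along_x[of "snd z"]])
       (use that d_xx[of "snd z" "fst z"] in auto)
  moreover have "\<phi>t z = 0" if "z \<notin> K" for z
    by (rule has_real_derivative_vanishing_outside_closed[where f = \<phi> and s = "snd z",
          OF \<open>closed K\<close> \<phi>0 along_t[of "fst z"]])
       (use that d_t[of "fst z" "snd z"] in auto)
  ultimately show thesis
    using that K \<phi>0 \<phi>x0 by force
qed

lemma compact_subset_upper_half_plane_box:
  fixes K :: "(real \<times> real) set"
  assumes "compact K" "K \<subseteq> UNIV \<times> {0<..}"
  obtains a b c d where "a < b" "0 < c" "c < d" "K \<subseteq> {a<..<b} \<times> {c<..<d}"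
proof -
  obtain r where r: "0 < r" "\<And>z. z \<in> K \<Longrightarrow> norm z \<le> r"
    using compact_imp_bounded[OF assms(1)] bounded_pos by metis
  have norm_le: "\<bar>fst z\<bar> \<le> r" "\<bar>snd z\<bar> \<le> r" if "z \<in> K" for z
    using r(2)[OF that] norm_fst_le[of "fst z" "snd z"] norm_snd_le[of "snd z" "fst z"] by auto
  obtain c where c: "0 < c" "c < r + 1" "\<And>z. z \<in> K \<Longrightarrow> c < snd z"
  proof (cases "K = {}")
    case True
    then show thesis
      using that[of "1/2"] r by auto
  next
    case False
    have "compact (snd ` K)"
      using assms(1) by (intro compact_continuous_image continuous_intros)
    then obtain m where m: "m \<in> snd ` K" "\<And>y. y \<in> snd ` K \<Longrightarrow> m \<le> y"
      using compact_attains_inf[of "snd ` K"] False by auto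
    obtain z where "z \<in> K" "m = snd z"
      using m(1) by blast
    then have "0 < m" "m \<le> r"
      using assms(2) norm_le(2)[of z] by auto
    then show thesis
      using that[of "m / 2"] m(2) by fastforce
  qed
  show thesis
  proof (rule that[of "- (r + 1)" "r + 1" c "r + 1"])
    show "K \<subseteq> {- (r + 1)<..<r + 1} \<times> {c<..<r + 1}"
    proof
      fix z assume "z \<in> K"
      then show "z \<in> {- (r + 1)<..<r + 1} \<times> {c<..<r + 1}"
        using norm_le[OF \<open>z \<in> K\<close>] c(3)[OF \<open>z \<in> K\<close>] by (cases z) (auto simp: abs_le_iff)
    qed
  qed (use r c in auto)
qed

lemma test_fun_time_cutoff:
  assumes test: "test_fun Q \<phi> \<phi>t \<phi>x \<phi>xx" and "Q \<subseteq> Q'"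
    and \<eta>: "\<And>t. (\<eta> has_real_derivative \<eta>' t) (at t)" "continuous_on UNIV \<eta>'"
  shows "test_fun Q' (\<lambda>p. \<eta> (snd p) * \<phi> p) (\<lambda>p. \<eta>' (snd p) * \<phi> p + \<eta> (snd p) * \<phi>t p)
           (\<lambda>p. \<eta> (snd p) * \<phi>x p) (\<lambda>p. \<eta> (snd p) * \<phi>xx p)"
proof -
  have "continuous_on UNIV \<eta>"
    using \<eta>(1) by (intro continuous_at_imp_continuous_on ballI DERIV_isCont)
  then have \<eta>_snd: "continuous_on UNIV (\<lambda>p::real \<times> real. \<eta> (snd p))"
    and \<eta>'_snd: "continuous_on UNIV (\<lambda>p::real \<times> real. \<eta>' (snd p))"
    using \<eta>(2) by (auto intro: continuous_on_compose_snd)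
  have d_t: "\<And>x t. ((\<lambda>t'. \<phi> (x, t')) has_real_derivative \<phi>t (x, t)) (at t)"
    using test unfolding test_fun_def by auto
  have time_derivative: "((\<lambda>t'. \<eta> t' * \<phi> (x, t')) has_real_derivative \<eta>' t * \<phi> (x, t) + \<eta> t * \<phi>t (x, t)) (at t)"
    for x t
    using DERIV_mult[OF \<eta>(1) d_t[of x t]] by (simp add: algebra_simps)
  obtain K where "compact K" "K \<subseteq> Q" "\<And>z. z \<notin> K \<Longrightarrow> \<phi> z = 0"
    using test unfolding test_fun_def by blast
  then show ?thesis
    using test \<open>Q \<subseteq> Q'\<close> \<eta>_snd \<eta>'_snd time_derivative
    unfolding test_fun_def by (auto intro!: continuous_intros DERIV_cmult exI[of _ K])
qed

section \<open>The heat kernel\<close>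

lemma integrable_std_normal_density: "integrable lborel std_normal_density"
  using integrable_std_normal_moment[of 0] by simp

lemma integral_std_normal_density: "integral\<^sup>L lborel std_normal_density = 1"
  using integral_std_normal_moment_even[of 0] by simp

text \<open>For t > 0 this is the Gaussian (4 pi t)^(-1/2) exp (- u^2 / (4 t)); the prefactor is kept
  inside the exponential so that continuity and derivatives only involve exp.\<close>
definition heat_kernel :: "real \<Rightarrow> real \<Rightarrow> real" where
  "heat_kernel t u = exp (- u\<^sup>2 / (4 * t) - ln (4 * pi * t) / 2)"

lemma heat_kernel_pos: "heat_kernel t u > 0"
  by (simp add: heat_kernel_def)

lemma heat_kernel_eq_std_normal_density:
  assumes t: "t > 0"
  shows "heat_kernel t u = std_normal_density (u / sqrt (2 * t)) / sqrt (2 * t)"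
proof -
  have "exp (ln (4 * pi * t) / 2) = (4 * pi * t) powr (1/2)"
    using t by (simp add: powr_def)
  also have "\<dots> = sqrt (2 * pi) * sqrt (2 * t)"
    using t by (simp add: powr_half_sqrt real_sqrt_mult[symmetric])
  finally have prefactor: "exp (- (ln (4 * pi * t) / 2)) = 1 / (sqrt (2 * pi) * sqrt (2 * t))"
    by (simp add: exp_minus field_simps)
  have "(u / sqrt (2 * t))\<^sup>2 / 2 = u\<^sup>2 / (4 * t)"
    using t by (simp add: power_divide)
  then show ?thesis
    unfolding heat_kernel_def diff_conv_add_uminus exp_add prefactor std_normal_density_def
    using t by (simp add: field_simps)
qed

text \<open>heat_kernel_dx t (z - x) is the x-derivative of heat_kernel t (z - x), and heat_kernel_dt is
  both the t-derivative and the second x-derivative: the heat equation.\<close>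
definition heat_kernel_dx :: "real \<Rightarrow> real \<Rightarrow> real" where
  "heat_kernel_dx t u = heat_kernel t u * (u / (2 * t))"

definition heat_kernel_dt :: "real \<Rightarrow> real \<Rightarrow> real" where
  "heat_kernel_dt t u = heat_kernel t u * (u\<^sup>2 / (4 * t\<^sup>2) - 1 / (2 * t))"

lemma heat_kernel_has_derivative_time:
  assumes t: "t > 0"
  shows "((\<lambda>t. heat_kernel t u) has_real_derivative heat_kernel_dt t u) (at t)"
proof -
  have "((\<lambda>t. - u\<^sup>2 / (4 * t) - ln (4 * pi * t) / 2) has_real_derivative
          u\<^sup>2 / (4 * t\<^sup>2) - 1 / (2 * t)) (at t)"
    by (rule derivative_eq_intros refl | use t in force)+
       (use t in \<open>simp add: field_simps power2_eq_square\<close>)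
  from DERIV_exp[THEN DERIV_chain2, OF this] show ?thesis
    unfolding heat_kernel_dt_def heat_kernel_def .
qed

lemma heat_kernel_has_derivative_space:
  assumes t: "t > 0"
  shows "((\<lambda>x. heat_kernel t (z - x)) has_real_derivative heat_kernel_dx t (z - x)) (at x)"
proof -
  have "((\<lambda>x. - (z - x)\<^sup>2 / (4 * t) - ln (4 * pi * t) / 2) has_real_derivative
          (z - x) / (2 * t)) (at x)"
    by (rule derivative_eq_intros refl | use t in force)+
       (use t in \<open>simp add: field_simps power2_eq_square\<close>)
  from DERIV_exp[THEN DERIV_chain2, OF this] show ?thesis
    unfolding heat_kernel_dx_def heat_kernel_def .
qed

lemma heat_kernel_dx_has_derivative_space:
  assumes t: "t > 0"
  shows "((\<lambda>x. heat_kernel_dx t (z - x)) has_real_derivative heat_kernel_dt t (z - x)) (at x)"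
proof -
  have "((\<lambda>x. (z - x) / (2 * t)) has_real_derivative (0 - 1) / (2 * t)) (at x)"
    by (intro DERIV_cdivide DERIV_diff DERIV_const DERIV_ident)
  from DERIV_mult[OF heat_kernel_has_derivative_space[OF t] this] show ?thesis
    unfolding heat_kernel_dx_def heat_kernel_dt_def
    by (rule DERIV_cong) (use t in \<open>simp add: field_simps power2_eq_square\<close>)
qed

lemma continuous_on_heat_kernel_derivatives:
  shows "continuous_on {p. snd p > 0} (\<lambda>p. heat_kernel (snd p) (z - fst p))"
    and "continuous_on {p. snd p > 0} (\<lambda>p. heat_kernel_dt (snd p) (z - fst p))"
  unfolding heat_kernel_dt_def heat_kernel_def by (intro continuous_intros; auto)+

lemma borel_measurable_heat_kernel [measurable]:
  "(\<lambda>p. heat_kernel (f p) (g p)) \<in> borel_measurable M"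
  if "f \<in> borel_measurable M" "g \<in> borel_measurable M"
  using that unfolding heat_kernel_def by measurable

lemma integrable_heat_kernel:
  assumes t: "t > 0"
  shows "integrable lborel (\<lambda>z. heat_kernel t (z - x))"
proof -
  have "integrable lborel (\<lambda>z. std_normal_density z / sqrt (2 * t))"
    by (intro integrable_divide_zero integrable_std_normal_density)
  then have "integrable lborel (\<lambda>z. (\<lambda>z. heat_kernel t (z - x)) (x + sqrt (2 * t) * z))"
    using t by (simp add: heat_kernel_eq_std_normal_density)
  then show ?thesis
    using lborel_integrable_real_affine_iff[of "sqrt (2 * t)" "\<lambda>z. heat_kernel t (z - x)" x] t
    by simp
qed

lemma integral_heat_kernel_mult:
  assumes t: "t > 0"
  shows "(\<integral>z. f z * heat_kernel t (z - x) \<partial>lborel)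
           = (\<integral>z. f (x + sqrt (2 * t) * z) * std_normal_density z \<partial>lborel)"
proof -
  have c: "sqrt (2 * t) > 0" using t by simp
  have "(\<integral>z. f z * heat_kernel t (z - x) \<partial>lborel)
      = \<bar>sqrt (2 * t)\<bar> *\<^sub>R (\<integral>z. f (x + sqrt (2 * t) * z)
                                * heat_kernel t (x + sqrt (2 * t) * z - x) \<partial>lborel)"
    using lborel_integral_real_affine[of "sqrt (2 * t)" "\<lambda>z. f z * heat_kernel t (z - x)" x] c
    by simp
  also have "\<dots> = (\<integral>z. f (x + sqrt (2 * t) * z) * std_normal_density z \<partial>lborel)"
    using c t by (simp add: heat_kernel_eq_std_normal_density)
  finally show ?thesis .
qed

lemma integral_heat_kernel: "t > 0 \<Longrightarrow> (\<integral>z. heat_kernel t (z - x) \<partial>lborel) = 1"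
  using integral_heat_kernel_mult[of t "\<lambda>_. 1" x] by (simp add: integral_std_normal_density)

lemma has_integral_heat_kernel_time_by_parts:
  fixes \<psi> \<psi>t :: "real \<times> real \<Rightarrow> real"
  assumes "0 < c" "c \<le> d" "continuous_on UNIV \<psi>" "continuous_on UNIV \<psi>t"
    and "\<And>x t. ((\<lambda>t. \<psi> (x, t)) has_real_derivative \<psi>t (x, t)) (at t)"
    and "\<And>x. \<psi> (x, c) = 0 \<and> \<psi> (x, d) = 0"
  shows "((\<lambda>p. heat_kernel (snd p) (z - fst p) * \<psi>t p + heat_kernel_dt (snd p) (z - fst p) * \<psi> p)
           has_integral 0) (cbox (a, c) (b, d))"
proof (rule has_integral_box_time_derivative[where F = "\<lambda>p. heat_kernel (snd p) (z - fst p) * \<psi> p"])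
  have "cbox (a, c) (b, d) \<subseteq> {p. snd p > 0}"
    using assms(1) by (auto simp: cbox_Pair_eq)
  with assms(3,4) show "continuous_on (cbox (a, c) (b, d))
      (\<lambda>p. heat_kernel (snd p) (z - fst p) * \<psi>t p + heat_kernel_dt (snd p) (z - fst p) * \<psi> p)"
    by (intro continuous_intros continuous_on_heat_kernel_derivatives[THEN continuous_on_subset])
       (auto intro: continuous_on_subset)
  show "((\<lambda>t. heat_kernel (snd (x, t)) (z - fst (x, t)) * \<psi> (x, t)) has_real_derivative
          heat_kernel (snd (x, t)) (z - fst (x, t)) * \<psi>t (x, t)
          + heat_kernel_dt (snd (x, t)) (z - fst (x, t)) * \<psi> (x, t)) (at t)"
    if "t \<in> {c..d}" for x t
  proof -
    have "0 < t"
      using that assms(1) by auto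
    from DERIV_mult[OF heat_kernel_has_derivative_time[OF this] assms(5)[where x = x and t = t]]
    show ?thesis
      unfolding fst_conv snd_conv by (rule DERIV_cong) (simp add: algebra_simps)
  qed
qed (use assms in auto)

lemma has_integral_heat_kernel_space_by_parts:
  fixes \<psi> \<psi>x \<psi>xx :: "real \<times> real \<Rightarrow> real"
  assumes "0 < c" "a \<le> b" "continuous_on UNIV \<psi>" "continuous_on UNIV \<psi>xx"
    and "\<And>x t. ((\<lambda>x. \<psi> (x, t)) has_real_derivative \<psi>x (x, t)) (at x)"
    and "\<And>x t. ((\<lambda>x. \<psi>x (x, t)) has_real_derivative \<psi>xx (x, t)) (at x)"
    and "\<And>t. \<psi> (a, t) = 0 \<and> \<psi> (b, t) = 0 \<and> \<psi>x (a, t) = 0 \<and> \<psi>x (b, t) = 0"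
  shows "((\<lambda>p. heat_kernel (snd p) (z - fst p) * \<psi>xx p - heat_kernel_dt (snd p) (z - fst p) * \<psi> p)
           has_integral 0) (cbox (a, c) (b, d))"
proof (rule has_integral_box_space_derivative[where
      F = "\<lambda>p. heat_kernel (snd p) (z - fst p) * \<psi>x p - heat_kernel_dx (snd p) (z - fst p) * \<psi> p"])
  have "cbox (a, c) (b, d) \<subseteq> {p. snd p > 0}"
    using assms(1) by (auto simp: cbox_Pair_eq)
  with assms(3,4) show "continuous_on (cbox (a, c) (b, d))
      (\<lambda>p. heat_kernel (snd p) (z - fst p) * \<psi>xx p - heat_kernel_dt (snd p) (z - fst p) * \<psi> p)"
    by (intro continuous_intros continuous_on_heat_kernel_derivatives[THEN continuous_on_subset])
       (auto intro: continuous_on_subset)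
  show "((\<lambda>x. heat_kernel (snd (x, t)) (z - fst (x, t)) * \<psi>x (x, t)
              - heat_kernel_dx (snd (x, t)) (z - fst (x, t)) * \<psi> (x, t)) has_real_derivative
          heat_kernel (snd (x, t)) (z - fst (x, t)) * \<psi>xx (x, t)
          - heat_kernel_dt (snd (x, t)) (z - fst (x, t)) * \<psi> (x, t)) (at x)"
    if "t \<in> {c..d}" for x t
  proof -
    have "0 < t"
      using that assms(1) by auto
    from DERIV_diff[OF DERIV_mult[OF heat_kernel_has_derivative_space[OF this] assms(6)[where x = x and t = t]]
                       DERIV_mult[OF heat_kernel_dx_has_derivative_space[OF this] assms(5)[where x = x and t = t]]]
    show ?thesis
      unfolding fst_conv snd_conv by (rule DERIV_cong) (simp add: algebra_simps)
  qed
qed (use assms in auto)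

lemma integral_heat_kernel_adjoint_heat_eq_0:
  assumes test: "test_fun (UNIV \<times> {0<..}) \<psi> \<psi>t \<psi>x \<psi>xx"
  shows "(\<integral>p. heat_kernel (snd p) (z - fst p) * (\<psi>t p + \<psi>xx p) \<partial>lborel) = 0"
proof -
  obtain K where K: "compact K" "K \<subseteq> UNIV \<times> {0<..}"
    and vanish: "\<And>p. p \<notin> K \<Longrightarrow> \<psi> p = 0 \<and> \<psi>t p = 0 \<and> \<psi>x p = 0 \<and> \<psi>xx p = 0"
    using test_fun_support[OF test] by blast
  obtain a b c d where box: "a < b" "0 < c" "c < d" "K \<subseteq> {a<..<b} \<times> {c<..<d}"
    using compact_subset_upper_half_plane_box[OF K] by blast
  define C where "C = cbox (a, c) (b, d)"
  have vanish_C: "\<psi> p = 0 \<and> \<psi>t p = 0 \<and> \<psi>x p = 0 \<and> \<psi>xx p = 0"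
    if "p \<notin> {a<..<b} \<times> {c<..<d}" for p
    using vanish that box(4) by blast
  have cont: "continuous_on UNIV \<psi>" "continuous_on UNIV \<psi>t" "continuous_on UNIV \<psi>xx"
    using test unfolding test_fun_def by auto
  have "((\<lambda>p. heat_kernel (snd p) (z - fst p) * (\<psi>t p + \<psi>xx p)) has_integral 0) C"
    using has_integral_add[OF
        has_integral_heat_kernel_time_by_parts[of c d \<psi> \<psi>t z a b]
        has_integral_heat_kernel_space_by_parts[of c a b \<psi> \<psi>xx \<psi>x z d]]
      box cont vanish_C test
    unfolding C_def test_fun_def by (auto simp: algebra_simps)
  moreover have "(\<integral>p. heat_kernel (snd p) (z - fst p) * (\<psi>t p + \<psi>xx p) \<partial>lborel)
      = integral C (\<lambda>p. heat_kernel (snd p) (z - fst p) * (\<psi>t p + \<psi>xx p))"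
  proof (rule integrable_vanishing_outside_compact(3))
    have "C \<subseteq> {p. snd p > 0}"
      using box by (auto simp: C_def cbox_Pair_eq)
    with cont show "continuous_on C (\<lambda>p. heat_kernel (snd p) (z - fst p) * (\<psi>t p + \<psi>xx p))"
      by (intro continuous_intros continuous_on_heat_kernel_derivatives[THEN continuous_on_subset])
         (auto intro: continuous_on_subset)
    show "heat_kernel (snd p) (z - fst p) * (\<psi>t p + \<psi>xx p) = 0" if "p \<notin> C" for p
    proof -
      have "p \<notin> K"
        using that box(4) by (auto simp: C_def cbox_Pair_eq)
      then show ?thesis
        using vanish by simp
    qed
  qed (simp add: C_def)
  ultimately show ?thesis
    by (simp add: integral_unique)
qed

section \<open>The heat flow on the line\<close>

text \<open>For t > 0 this is the convolution of W with the heat kernel (heat_flow_eq_convolution); written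
  as a Gaussian average it is continuous on the whole plane, in particular up to t = 0.\<close>
definition heat_flow :: "(real \<Rightarrow> real) \<Rightarrow> real \<times> real \<Rightarrow> real" where
  "heat_flow W p = (\<integral>z. W (fst p + sqrt (2 * snd p) * z) * std_normal_density z \<partial>lborel)"

lemma heat_flow_initial: "heat_flow W (x, 0) = W x"
  by (simp add: heat_flow_def integral_std_normal_density)

lemma heat_flow_antisymmetric_point:
  assumes "\<And>x. W (c + x) = - W (c - x)"
  shows "heat_flow W (c, t) = 0"
proof -
  let ?f = "\<lambda>z. W (c + sqrt (2 * t) * z) * std_normal_density z"
  have "integral\<^sup>L lborel ?f = \<bar>-1\<bar> *\<^sub>R integral\<^sup>L lborel (\<lambda>z. ?f (0 + (-1) * z))"
    by (rule lborel_integral_real_affine) simp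
  also have "\<dots> = - integral\<^sup>L lborel ?f"
    using assms[of "sqrt (2 * t) * _"] by (simp add: std_normal_density_def)
  finally show ?thesis by (simp add: heat_flow_def)
qed

lemma heat_flow_eq_convolution:
  "t > 0 \<Longrightarrow> heat_flow W (x, t) = (\<integral>z. W z * heat_kernel t (z - x) \<partial>lborel)"
  by (simp add: integral_heat_kernel_mult heat_flow_def)

context
  fixes W :: "real \<Rightarrow> real" and B :: real
  assumes continuous_W: "continuous_on UNIV W" and bounded_W: "\<And>x. \<bar>W x\<bar> \<le> B"
begin

lemma borel_measurable_initial_datum [measurable]: "W \<in> borel_measurable borel"
  using continuous_W by (rule borel_measurable_continuous_onI)

lemma initial_datum_bound_nonneg: "0 \<le> B"
  using bounded_W[of 0] by linarith

lemma continuous_on_heat_flow: "continuous_on UNIV (heat_flow W)"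
proof (rule continuous_on_sequentiallyI)
  fix u :: "nat \<Rightarrow> real \<times> real" and p
  assume "u \<longlonglongrightarrow> p"
  have W_isCont: "isCont W x" for x
    using continuous_W by (simp add: continuous_on_eq_continuous_at)
  have "(\<lambda>i. W (fst (u i) + sqrt (2 * snd (u i)) * z)) \<longlonglongrightarrow> W (fst p + sqrt (2 * snd p) * z)"
    for z
    by (rule isCont_tendsto_compose[OF W_isCont]) (use \<open>u \<longlonglongrightarrow> p\<close> in \<open>intro tendsto_intros\<close>)
  then show "(\<lambda>i. heat_flow W (u i)) \<longlonglongrightarrow> heat_flow W p"
    unfolding heat_flow_def
    using bounded_W
    by (intro integral_dominated_convergence[where w="\<lambda>z. B * std_normal_density z"])
       (auto intro!: tendsto_mult integrable_mult_right integrable_std_normal_density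
             simp: abs_mult mult_right_mono)
qed

lemma borel_measurable_heat_flow [measurable]: "heat_flow W \<in> borel_measurable borel"
  using continuous_on_heat_flow by (rule borel_measurable_continuous_onI)

lemma integrable_initial_datum_heat_kernel:
  assumes "0 < t"
  shows "integrable lborel (\<lambda>z. W z * heat_kernel t (z - x))"
    and "(\<integral>z. \<bar>W z * heat_kernel t (z - x)\<bar> \<partial>lborel) \<le> B"
proof -
  have bound: "\<bar>W z * heat_kernel t (z - x)\<bar> \<le> B * heat_kernel t (z - x)" for z
    using mult_right_mono[OF bounded_W[of z], of "heat_kernel t (z - x)"] heat_kernel_pos[of t "z - x"]
    by (simp add: abs_mult)
  show int: "integrable lborel (\<lambda>z. W z * heat_kernel t (z - x))"
    by (rule Bochner_Integration.integrable_bound[OF integrable_mult_right[OF integrable_heat_kernel[OF assms]]])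
       (use bound in \<open>auto intro!: AE_I2 order_trans[OF _ abs_ge_self]\<close>)
  have "(\<integral>z. \<bar>W z * heat_kernel t (z - x)\<bar> \<partial>lborel) \<le> (\<integral>z. B * heat_kernel t (z - x) \<partial>lborel)"
    using int integrable_heat_kernel[OF assms] bound by (intro integral_mono) auto
  then show "(\<integral>z. \<bar>W z * heat_kernel t (z - x)\<bar> \<partial>lborel) \<le> B"
    by (simp add: integral_heat_kernel[OF assms])
qed

lemma integrable_heat_kernel_product:
  fixes P :: "real \<times> real \<Rightarrow> real"
  assumes [measurable]: "P \<in> borel_measurable borel" and "integrable lborel P"
    and P_vanish: "\<And>p. snd p \<le> 0 \<Longrightarrow> P p = 0"
  shows "integrable (lborel \<Otimes>\<^sub>M lborel) (\<lambda>(p, z). W z * heat_kernel (snd p) (z - fst p) * P p)"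
proof -
  define f where "f q = W (snd q) * heat_kernel (snd (fst q)) (snd q - fst (fst q)) * P (fst q)"
    for q :: "(real \<times> real) \<times> real"
  have [measurable]: "W \<in> borel_measurable lborel" "P \<in> borel_measurable lborel"
    "fst \<in> borel_measurable (lborel :: (real \<times> real) measure)"
    "snd \<in> borel_measurable (lborel :: (real \<times> real) measure)"
    by (simp_all add: borel_measurable_continuous_onI continuous_on_fst continuous_on_snd continuous_on_id)
  have f_meas [measurable]: "f \<in> borel_measurable (lborel \<Otimes>\<^sub>M lborel)"
    unfolding f_def by measurable
  have inner_integrable: "integrable lborel (\<lambda>z. f (p, z))" for p
    using integrable_initial_datum_heat_kernel(1)[of "snd p" "fst p"] P_vanish[of p]
    by (cases "snd p > 0") (auto simp: f_def)
  have inner_norm: "(\<integral>z. norm (f (p, z)) \<partial>lborel) \<le> B * \<bar>P p\<bar>" for p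
    using integrable_initial_datum_heat_kernel(2)[of "snd p" "fst p"] P_vanish[of p]
      initial_datum_bound_nonneg
    by (cases "snd p > 0") (auto simp: f_def abs_mult mult_right_mono)
  have "integrable (lborel \<Otimes>\<^sub>M lborel) f"
  proof (rule lborel_pair.Fubini_integrable)
    show "integrable lborel (\<lambda>p. \<integral>z. norm (f (p, z)) \<partial>lborel)"
    proof (rule Bochner_Integration.integrable_bound)
      show "integrable lborel (\<lambda>p. B * \<bar>P p\<bar>)"
        using assms(2) by (intro integrable_mult_right integrable_abs)
      show "AE p in lborel. norm (\<integral>z. norm (f (p, z)) \<partial>lborel) \<le> norm (B * \<bar>P p\<bar>)"
        using inner_norm initial_datum_bound_nonneg by (auto simp: abs_mult)
    qed measurable
  qed (use inner_integrable in auto)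
  moreover have "(\<lambda>(p, z). W z * heat_kernel (snd p) (z - fst p) * P p) = f"
    by (auto simp: f_def)
  ultimately show ?thesis
    by simp
qed

lemma integral_heat_flow_mult:
  fixes P :: "real \<times> real \<Rightarrow> real"
  assumes "P \<in> borel_measurable borel" "integrable lborel P" "\<And>p. snd p \<le> 0 \<Longrightarrow> P p = 0"
  shows "(\<integral>p. heat_flow W p * P p \<partial>lborel)
           = (\<integral>z. W z * (\<integral>p. heat_kernel (snd p) (z - fst p) * P p \<partial>lborel) \<partial>lborel)"
proof -
  have "(\<integral>p. (\<integral>z. W z * heat_kernel (snd p) (z - fst p) * P p \<partial>lborel) \<partial>lborel)
      = (\<integral>z. (\<integral>p. W z * heat_kernel (snd p) (z - fst p) * P p \<partial>lborel) \<partial>lborel)"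
    using lborel_pair.Fubini_integral[OF integrable_heat_kernel_product[OF assms]] by simp
  moreover have "(\<integral>z. W z * heat_kernel (snd p) (z - fst p) * P p \<partial>lborel) = heat_flow W p * P p" for p
  proof (cases "snd p > 0")
    case True
    then show ?thesis
      using heat_flow_eq_convolution[OF True, of W "fst p"] by simp
  qed (use assms(3)[of p] in simp)
  ultimately show ?thesis
    by (simp add: mult.assoc)
qed

lemma heat_weak_heat_flow: "heat_weak (UNIV \<times> {0<..}) (heat_flow W) (\<lambda>_. 0)"
  unfolding heat_weak_def
proof (intro allI impI)
  fix \<phi> \<phi>t \<phi>x \<phi>xx
  assume test: "test_fun (UNIV \<times> {0<..}) \<phi> \<phi>t \<phi>x \<phi>xx"
  obtain K where K: "compact K" "K \<subseteq> UNIV \<times> {0<..}"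
    and vanish: "\<And>p. p \<notin> K \<Longrightarrow> \<phi> p = 0 \<and> \<phi>t p = 0 \<and> \<phi>x p = 0 \<and> \<phi>xx p = 0"
    using test_fun_support[OF test] by blast
  define P where "P p = \<phi>t p + \<phi>xx p" for p
  have "continuous_on UNIV P"
    using test unfolding test_fun_def P_def by (intro continuous_intros) auto
  then have P_meas: "P \<in> borel_measurable borel"
    by (rule borel_measurable_continuous_onI)
  have P_int: "integrable lborel P"
    using vanish K(1) \<open>continuous_on UNIV P\<close>
    by (intro integrable_vanishing_outside_compact(1)[of K]) (auto simp: P_def intro: continuous_on_subset)
  have P_vanish: "P p = 0" if "snd p \<le> 0" for p
    using that K(2) vanish[of p] by (force simp: P_def)
  have P_integral: "(\<integral>p. heat_flow W p * P p \<partial>lborel) = 0"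
    using integral_heat_flow_mult[OF P_meas P_int P_vanish] integral_heat_kernel_adjoint_heat_eq_0[OF test]
    by (simp add: P_def)
  have "indicator (UNIV \<times> {0<..}) p * heat_flow W p * (- \<phi>t p - \<phi>xx p) = - (heat_flow W p * P p)"
    for p
    using K(2) vanish[of p] by (cases "p \<in> K") (auto simp: P_def indicator_def algebra_simps)
  then have "(LINT z|lebesgue. indicator (UNIV \<times> {0<..}) z * heat_flow W z * (- \<phi>t z - \<phi>xx z))
      = (LINT z|lebesgue. - (heat_flow W z * P z))"
    by simp
  also have "\<dots> = (\<integral>z. - (heat_flow W z * P z) \<partial>lborel)"
    by (rule integral_completion) (use P_meas in measurable)
  also have "\<dots> = 0"
    using P_integral by simp
  finally show "(LINT z|lebesgue. indicator (UNIV \<times> {0<..}) z * heat_flow W z * (- \<phi>t z - \<phi>xx z))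
      = (LINT z|lebesgue. indicator (UNIV \<times> {0<..}) z * 0 * \<phi> z)"
    by simp
qed

end

section \<open>Cutting off in time\<close>

lemma has_real_derivative_max_0_power2:
  "((\<lambda>u. (max 0 u)\<^sup>2) has_real_derivative 2 * max 0 u) (at u)"
proof (cases u "0::real" rule: linorder_cases)
  case less
  have "eventually (\<lambda>v. (max 0 v)\<^sup>2 = 0) (nhds u)"
    using eventually_nhds_in_open[of "{..<0}" u] less by (auto elim!: eventually_mono)
  from DERIV_cong_ev[OF refl this refl] show ?thesis
    using less by simp
next
  case greater
  have "eventually (\<lambda>v. (max 0 v)\<^sup>2 = v\<^sup>2) (nhds u)"
    using eventually_nhds_in_open[of "{0<..}" u] greater by (auto elim!: eventually_mono)
  moreover have "((\<lambda>v. v\<^sup>2) has_real_derivative 2 * u) (at u)"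
    by (rule derivative_eq_intros refl)+ simp
  ultimately show ?thesis
    using greater DERIV_cong_ev[OF refl, of "\<lambda>v. (max 0 v)\<^sup>2" "\<lambda>v. v\<^sup>2" u "2 * u"] by simp
next
  case equal
  have "((\<lambda>v::real. ((max 0 v)\<^sup>2 - (max 0 0)\<^sup>2) / (v - 0)) \<longlongrightarrow> 0) (at 0)"
  proof (rule Lim_null_comparison)
    show "\<forall>\<^sub>F v in at 0. norm (((max 0 v)\<^sup>2 - (max 0 0)\<^sup>2) / (v - 0)) \<le> \<bar>v\<bar>"
      by (intro always_eventually allI) (auto simp: max_def power2_eq_square abs_mult)
    show "((\<lambda>v. \<bar>v\<bar>) \<longlongrightarrow> 0) (at (0::real))"
      by (rule tendsto_eq_intros refl)+ simp
  qed
  then show ?thesis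
    using equal by (simp add: has_field_derivative_iff)
qed

definition cutoff :: "real \<Rightarrow> real \<Rightarrow> real" where
  "cutoff a t = (max 0 (1 - t / a))\<^sup>2"

definition cutoff_deriv :: "real \<Rightarrow> real \<Rightarrow> real" where
  "cutoff_deriv a t = - 2 * max 0 (1 - t / a) / a"

lemma cutoff_0 [simp]: "cutoff a 0 = 1"
  by (simp add: cutoff_def)

lemma cutoff_eq_0: "0 < a \<Longrightarrow> a \<le> t \<Longrightarrow> cutoff a t = 0"
  by (simp add: cutoff_def)

lemma cutoff_deriv_eq_0: "0 < a \<Longrightarrow> a \<le> t \<Longrightarrow> cutoff_deriv a t = 0"
  by (simp add: cutoff_deriv_def)

lemma continuous_on_cutoff: "0 < a \<Longrightarrow> continuous_on UNIV (cutoff a)"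
  unfolding cutoff_def by (intro continuous_intros) auto

lemma continuous_on_cutoff_deriv: "0 < a \<Longrightarrow> continuous_on UNIV (cutoff_deriv a)"
  unfolding cutoff_deriv_def by (intro continuous_intros) auto

lemma cutoff_has_real_derivative: "0 < a \<Longrightarrow> (cutoff a has_real_derivative cutoff_deriv a t) (at t)"
proof -
  assume "0 < a"
  then have "((\<lambda>t. 1 - t / a) has_real_derivative - 1 / a) (at t)"
    by (intro derivative_eq_intros refl) auto
  from DERIV_chain2[OF has_real_derivative_max_0_power2 this] show ?thesis
    unfolding cutoff_def[abs_def] cutoff_deriv_def by simp
qed

lemma heat_weak_time_cutoff:
  fixes Y :: "real \<times> real \<Rightarrow> real" and \<eta> \<eta>' :: "real \<Rightarrow> real"
  assumes Y: "heat_weak (UNIV \<times> {0<..}) Y (\<lambda>_. 0)" "continuous_on (UNIV \<times> {0<..}) Y"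
    and \<eta>: "\<And>t. (\<eta> has_real_derivative \<eta>' t) (at t)" "continuous_on UNIV \<eta>'"
    and Q: "Q \<subseteq> UNIV \<times> {0<..}"
  shows "heat_weak Q (\<lambda>p. \<eta> (snd p) * Y p) (\<lambda>p. \<eta>' (snd p) * Y p)"
  unfolding heat_weak_def
proof (intro allI impI)
  fix \<phi> \<phi>t \<phi>x \<phi>xx
  assume test: "test_fun Q \<phi> \<phi>t \<phi>x \<phi>xx"
  obtain K where K: "compact K" "K \<subseteq> Q"
    and vanish: "\<And>p. p \<notin> K \<Longrightarrow> \<phi> p = 0 \<and> \<phi>t p = 0 \<and> \<phi>x p = 0 \<and> \<phi>xx p = 0"
    using test_fun_support[OF test] by blast
  define A where "A p = \<eta> (snd p) * Y p * (- \<phi>t p - \<phi>xx p)" for p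
  define R where "R p = \<eta>' (snd p) * Y p * \<phi> p" for p
  have "continuous_on UNIV \<eta>"
    using \<eta>(1) by (intro continuous_at_imp_continuous_on ballI DERIV_isCont)
  then have "continuous_on K (\<lambda>p. \<eta> (snd p))" "continuous_on K (\<lambda>p. \<eta>' (snd p))"
    using \<eta>(2) by (auto intro: continuous_on_compose_snd)
  moreover have "continuous_on K Y"
    using K(2) Q by (blast intro: continuous_on_subset[OF Y(2)])
  ultimately have "integrable lebesgue A" "integrable lebesgue R"
    using test K vanish unfolding A_def R_def test_fun_def
    by (auto intro!: integrable_vanishing_outside_compact(2)[of K] continuous_intros
             intro: continuous_on_subset)
  (* test the equation for Y against \<eta> \<phi>; the product rule turns \<eta>' into the source term *)
  have "(LINT p|lebesgue. indicator (UNIV \<times> {0<..}) p * Y p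
            * (- (\<eta>' (snd p) * \<phi> p + \<eta> (snd p) * \<phi>t p) - \<eta> (snd p) * \<phi>xx p))
        = (LINT p|lebesgue. indicator (UNIV \<times> {0<..}) p * 0 * (\<eta> (snd p) * \<phi> p))"
    using Y(1) test_fun_time_cutoff[OF test Q \<eta>] unfolding heat_weak_def by blast
  moreover have "indicator (UNIV \<times> {0<..}) p * Y p
            * (- (\<eta>' (snd p) * \<phi> p + \<eta> (snd p) * \<phi>t p) - \<eta> (snd p) * \<phi>xx p) = A p - R p" for p
    using vanish[of p] K(2) Q by (cases "p \<in> K") (auto simp: A_def R_def algebra_simps)
  ultimately have "(LINT p|lebesgue. A p) = (LINT p|lebesgue. R p)"
    using \<open>integrable lebesgue A\<close> \<open>integrable lebesgue R\<close> by simp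
  moreover have "indicator Q p * (\<eta> (snd p) * Y p) * (- \<phi>t p - \<phi>xx p) = A p"
    and "indicator Q p * (\<eta>' (snd p) * Y p) * \<phi> p = R p" for p
    using vanish[of p] K(2) by (cases "p \<in> K"; auto simp: A_def R_def)+
  ultimately show "(LINT p|lebesgue. indicator Q p * (\<eta> (snd p) * Y p) * (- \<phi>t p - \<phi>xx p))
      = (LINT p|lebesgue. indicator Q p * (\<eta>' (snd p) * Y p) * \<phi> p)"
    by simp
qed

section \<open>The initial datum\<close>

lemma H10_continuous_representative:
  assumes "H10 u"
  obtains w where "continuous_on {0..1} w" "w 0 = 0" "w 1 = 0"
    "AE x in lebesgue. x \<in> {0<..<1} \<longrightarrow> u x = w x"
proof -
  from assms obtain w v where v: "L2_on {0<..<1} v"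
    and w: "\<forall>x\<in>{0..1}. w x = (LINT s:{0..x}|lebesgue. v s)" and "w 1 = 0"
    and ae: "AE x in lebesgue. x \<in> {0<..<1} \<longrightarrow> u x = w x"
    unfolding H10_def by blast
  have "integrable lebesgue (\<lambda>s. indicator {0<..<1::real} s * v s)"
    by (rule L2_on_integrable[OF v]) simp
  then have v_int: "set_integrable lebesgue {0..1::real} v"
    unfolding set_integrable_def
  proof (rule integrable_discrete_difference[where X = "{0, 1}", THEN iffD1, rotated -1])
    fix s :: real
    assume "s \<in> {0, 1}"
    have "{s} \<in> null_sets lebesgue"
      by (intro null_sets_completionI countable_imp_null_set_lborel) simp
    then show "emeasure lebesgue {s} = 0" "{s} \<in> sets lebesgue"
      by auto
  qed (auto simp: indicator_def)
  have w_eq: "w x = integral {0..x} v" if "x \<in> {0..1}" for x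
    using w that set_lebesgue_integral_eq_integral(2)[OF set_integrable_subset[OF v_int]] by auto
  have "continuous_on {0..1} (\<lambda>x. integral {0..x} v)"
    using set_lebesgue_integral_eq_integral(1)[OF v_int] by (rule indefinite_integral_continuous_1)
  then have "continuous_on {0..1} w"
    by (rule continuous_on_cong[THEN iffD1, OF refl, rotated]) (simp add: w_eq)
  moreover have "w 0 = 0"
    using w_eq[of 0] by simp
  ultimately show thesis
    using that \<open>w 1 = 0\<close> ae by blast
qed

definition periodic_extension :: "real \<Rightarrow> real \<Rightarrow> (real \<Rightarrow> 'a) \<Rightarrow> real \<Rightarrow> 'a" where
  "periodic_extension a p h x = h (x - p * \<lfloor>(x - a) / p\<rfloor>)"

lemma periodic_extension_reduction:
  fixes x a p :: real
  assumes "0 < p"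
  shows "x - p * \<lfloor>(x - a) / p\<rfloor> \<in> {a..<a + p}"
proof -
  have "p * \<lfloor>(x - a) / p\<rfloor> \<le> p * ((x - a) / p)"
    using assms by (intro mult_left_mono of_int_floor_le) auto
  moreover have "p * ((x - a) / p) < p * (real_of_int \<lfloor>(x - a) / p\<rfloor> + 1)"
    using assms by (intro mult_strict_left_mono real_of_int_floor_add_one_gt)
  moreover have "p * ((x - a) / p) = x - a"
    using assms by simp
  ultimately show ?thesis
    using assms by (auto simp: distrib_left)
qed

lemma periodic_extension_range:
  "0 < (p::real) \<Longrightarrow> periodic_extension a p h x \<in> h ` {a..a + p}"
  using periodic_extension_reduction[of p x a] unfolding periodic_extension_def by auto

lemma periodic_extension_eq:
  fixes x a p :: real
  assumes "0 < p" "h (a + p) = h a" "x - p * of_int k \<in> {a..a + p}"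
  shows "periodic_extension a p h x = h (x - p * of_int k)"
proof -
  define m where "m = \<lfloor>(x - a) / p\<rfloor>"
  have m: "x - p * of_int m \<in> {a..<a + p}"
    unfolding m_def by (rule periodic_extension_reduction[OF assms(1)])
  have "p * (- 1) < p * of_int (m - k)" "p * of_int (m - k) \<le> p * 1"
    using m assms(3) by (auto simp: algebra_simps)
  then have "(- 1 :: real) < of_int (m - k)" "of_int (m - k) \<le> (1::real)"
    using assms(1) by (simp_all only: mult_less_cancel_left_pos mult_le_cancel_left_pos)
  then have "- 1 < m - k" "m - k \<le> 1"
    by simp_all
  then have "m = k \<or> m = k + 1"
    by linarith
  then show ?thesis
    using m assms(2,3) unfolding periodic_extension_def m_def[symmetric]
    by (auto simp: algebra_simps)
qed

lemma periodic_extension_add_period: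
  "0 < (p::real) \<Longrightarrow> h (a + p) = h a \<Longrightarrow> periodic_extension a p h (x + p) = periodic_extension a p h x"
  using periodic_extension_eq[of p h a "x + p" "\<lfloor>(x - a) / p\<rfloor> + 1"]
    periodic_extension_reduction[of p x a]
  by (simp add: periodic_extension_def algebra_simps)

lemma periodic_extension_odd:
  fixes c :: real
  assumes "0 < c" "h c = h (- c)" "\<And>y. h (- y) = - h y"
  shows "periodic_extension (- c) (2 * c) h (- x) = - periodic_extension (- c) (2 * c) h x"
proof -
  define k where "k = \<lfloor>(x + c) / (2 * c)\<rfloor>"
  have "x - 2 * c * k \<in> {- c..<c}"
    using periodic_extension_reduction[of "2 * c" x "- c"] assms(1) by (simp add: k_def)
  then have "periodic_extension (- c) (2 * c) h (- x) = h (- x - 2 * c * of_int (- k))"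
    using assms by (intro periodic_extension_eq) auto
  also have "\<dots> = - h (x - 2 * c * k)"
    using assms(3)[of "x - 2 * c * k"] by (simp add: algebra_simps)
  also have "\<dots> = - periodic_extension (- c) (2 * c) h x"
    by (simp add: periodic_extension_def k_def)
  finally show ?thesis .
qed

lemma continuous_on_periodic_extension:
  fixes h :: "real \<Rightarrow> 'a::topological_space"
  assumes "0 < p" "continuous_on {a..a + p} h" "h (a + p) = h a"
  shows "continuous_on UNIV (periodic_extension a p h)"
proof -
  have piece: "continuous_on {a + p * k .. a + p * k + p} (periodic_extension a p h)" for k :: int
  proof -
    have "continuous_on {a + p * k .. a + p * k + p} (\<lambda>x. h (x - p * k))"
      by (rule continuous_on_compose2[OF assms(2)]) (auto intro: continuous_intros)
    then show ?thesis
      by (rule continuous_on_cong[THEN iffD1, OF refl, rotated])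
         (use periodic_extension_eq[OF assms(1,3), of _ k] in \<open>auto simp: algebra_simps\<close>)
  qed
  show ?thesis
  proof (rule continuous_at_imp_continuous_on, intro ballI)
    fix x :: real
    define k where "k = \<lfloor>(x - a) / p\<rfloor>"
    have x: "x \<in> {a + p * k ..< a + p * k + p}"
      using periodic_extension_reduction[OF assms(1), of x a] by (simp add: k_def algebra_simps)
    have "continuous_on ({a + p * (k - 1) .. a + p * (k - 1) + p} \<union> {a + p * k .. a + p * k + p})
            (periodic_extension a p h)"
      by (intro continuous_on_closed_Un piece) auto
    moreover have "{a + p * (k - 1) .. a + p * (k - 1) + p} \<union> {a + p * k .. a + p * k + p}
        = {a + p * (k - 1) .. a + p * k + p}"
      by (auto simp: algebra_simps)
    moreover have "x \<in> interior {a + p * (k - 1) .. a + p * k + p}"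
      using x assms(1) by (simp add: algebra_simps)
    ultimately show "isCont (periodic_extension a p h) x"
      by (metis continuous_on_interior)
  qed
qed

lemma odd_periodic_extension:
  fixes w :: "real \<Rightarrow> real"
  assumes w: "continuous_on {0..1} w" "w 0 = 0" "w 1 = 0"
  obtains W B where "continuous_on UNIV W" "\<And>x. \<bar>W x\<bar> \<le> B" "\<And>x. W (- x) = - W x"
    "\<And>x. W (1 + x) = - W (1 - x)" "\<And>x. x \<in> {0..1} \<Longrightarrow> W x = w x"
proof -
  define v where "v y = (if y \<le> 0 then - w (- y) else w y)" for y
  define W where "W = periodic_extension (- 1) 2 v"
  have v_odd: "v (- y) = - v y" for y
    using w(2) by (simp add: v_def)
  have v_period: "v (- 1 + 2) = v (- 1)"
    using w(3) by (simp add: v_def)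
  have "continuous_on {- 1..1} v"
    unfolding v_def
  proof (rule continuous_on_cases_le[where h = "\<lambda>y. y" and a = 0])
    show "continuous_on {y \<in> {- 1..1}. y \<le> 0} (\<lambda>y. - w (- y))"
      by (intro continuous_intros continuous_on_compose2[OF w(1)]) auto
    show "continuous_on {y \<in> {- 1..1}. 0 \<le> y} w"
      by (rule continuous_on_subset[OF w(1)]) auto
  qed (use w(2) in \<open>auto intro: continuous_intros\<close>)
  then have "continuous_on UNIV W"
    unfolding W_def using v_period by (intro continuous_on_periodic_extension) simp_all
  moreover obtain B where "\<forall>y \<in> {- 1..1}. \<bar>v y\<bar> \<le> B"
    using compact_imp_bounded[OF compact_continuous_image[OF \<open>continuous_on {- 1..1} v\<close>]]
    by (auto simp: bounded_iff)
  then have "\<bar>W x\<bar> \<le> B" for x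
    using periodic_extension_range[of 2 "- 1" v x] by (auto simp: W_def)
  moreover have W_odd: "W (- x) = - W x" for x
    using periodic_extension_odd[of 1 v x] v_odd v_period by (simp add: W_def)
  moreover have "W (1 + x) = - W (1 - x)" for x
    using periodic_extension_add_period[of 2 v "- 1" "x - 1"] v_period W_odd[of "1 - x"]
    by (simp add: W_def)
  moreover have "W x = w x" if "x \<in> {0..1}" for x
    using periodic_extension_eq[of 2 v "- 1" x 0] v_period that w(2)
    by (cases "x = 0") (simp_all add: W_def v_def)
  ultimately show thesis
    using that by blast
qed

section \<open>The weights\<close>

lemma theta_adm_continuous_on:
  assumes "theta_adm T T1 lam s \<theta>"
  shows "continuous_on {0..<T} \<theta>"
proof -
  obtain \<theta>' where "\<forall>t\<in>{0..<T}. (\<theta> has_real_derivative \<theta>' t) (at t within {0..<T})"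
    using assms unfolding theta_adm_def by blast
  then show ?thesis
    by (intro DERIV_continuous_on) auto
qed

lemma theta_adm_ge_1: "theta_adm T T1 lam s \<theta> \<Longrightarrow> t \<in> {0..T / 4} \<Longrightarrow> 1 \<le> \<theta> t"
  unfolding theta_adm_def by auto

lemma psi_adm_continuous_on:
  assumes "psi_adm \<omega> \<psi>"
  shows "continuous_on {0..1} \<psi>"
proof -
  obtain \<psi>' where "\<forall>x\<in>{0..1}. (\<psi> has_real_derivative \<psi>' x) (at x within {0..1})"
    using assms unfolding psi_adm_def by blast
  then show ?thesis
    by (intro DERIV_continuous_on) auto
qed

lemma continuous_on_rho:
  assumes "continuous_on A \<psi>" "continuous_on B \<theta>"
  shows "continuous_on (A \<times> B) (rho lam \<psi> \<theta> s)"
proof -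
  have "continuous_on (A \<times> B) (\<lambda>z. \<psi> (fst z))" "continuous_on (A \<times> B) (\<lambda>z. \<theta> (snd z))"
    using assms(1,2) by (auto intro: continuous_on_compose_fst continuous_on_compose_snd)
  then show ?thesis
    unfolding rho_def[abs_def] varphi_def psi_hat_def by (intro continuous_intros)
qed

lemma continuous_on_rho0:
  assumes "continuous_on A \<psi>" "continuous_on B \<theta>" "\<And>t. t \<in> B \<Longrightarrow> \<theta> t \<noteq> 0"
  shows "continuous_on (A \<times> B) (rho0 lam \<psi> \<theta> s)"
proof -
  have "continuous_on (A \<times> B) (\<lambda>z. \<psi> (fst z))" "continuous_on (A \<times> B) (\<lambda>z. \<theta> (snd z))"
    using assms(1,2) by (auto intro: continuous_on_compose_fst continuous_on_compose_snd)
  then show ?thesis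
    unfolding rho0_def[abs_def] xi_def psi_hat_def
    using continuous_on_rho[OF assms(1,2)] assms(3)
    by (intro continuous_intros) auto
qed

lemma L2_on_QT_vanishing_after:
  assumes "continuous_on ({0..1} \<times> {0..a}) h" "\<And>p. a \<le> snd p \<Longrightarrow> h p = 0"
  shows "L2_on (QT T) h"
proof (rule L2_on_continuous_compact[OF _ _ assms(1)])
  show "QT T \<in> sets borel"
    unfolding QT_def by (intro borel_open open_Times) auto
  show "h z = 0" if "z \<in> QT T" "z \<notin> {0..1} \<times> {0..a}" for z
    using that assms(2)[of z] by (cases z) (auto simp: QT_def)
qed (intro compact_Times compact_Icc)

lemma continuous_on_weights:
  assumes "theta_adm T T1 lam s \<theta>" "psi_adm \<omega> \<psi>" "0 < T"
  shows "continuous_on ({0..1} \<times> {0..T / 4}) (rho lam \<psi> \<theta> s)"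
    and "continuous_on ({0..1} \<times> {0..T / 4}) (rho0 lam \<psi> \<theta> s)"
proof -
  have "continuous_on {0..T / 4} \<theta>" "\<And>t. t \<in> {0..T / 4} \<Longrightarrow> \<theta> t \<noteq> 0"
    using theta_adm_continuous_on[OF assms(1)] theta_adm_ge_1[OF assms(1)] assms(3)
    by (force intro: continuous_on_subset)+
  then show "continuous_on ({0..1} \<times> {0..T / 4}) (rho lam \<psi> \<theta> s)"
    and "continuous_on ({0..1} \<times> {0..T / 4}) (rho0 lam \<psi> \<theta> s)"
    using psi_adm_continuous_on[OF assms(2)] by (auto intro: continuous_on_rho continuous_on_rho0)
qed

lemma cutoff_mult_in_adm_set:
  assumes \<theta>: "theta_adm T T1 lam s \<theta>" and \<psi>: "psi_adm \<omega> \<psi>" and "0 < T"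
    and Y: "continuous_on UNIV Y" "heat_weak (UNIV \<times> {0<..}) Y (\<lambda>_. 0)"
    and initial: "AE x in lebesgue. x \<in> {0<..<1} \<longrightarrow> Y (x, 0) = u0 x"
    and boundary: "\<And>t. Y (0, t) = 0" "\<And>t. Y (1, t) = 0"
  shows "(\<lambda>p. cutoff (T / 4) (snd p) * Y p, \<lambda>_. 0) \<in> adm_set \<omega> T lam \<psi> \<theta> s u0"
proof -
  define y where "y p = cutoff (T / 4) (snd p) * Y p" for p
  define g where "g p = cutoff_deriv (T / 4) (snd p) * Y p" for p
  have "0 < T / 4"
    using \<open>0 < T\<close> by simp
  have cont: "continuous_on S y" "continuous_on S g" for S
    using Y(1) continuous_on_cutoff[OF \<open>0 < T / 4\<close>] continuous_on_cutoff_deriv[OF \<open>0 < T / 4\<close>]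
    unfolding y_def[abs_def] g_def[abs_def]
    by (auto intro!: continuous_intros continuous_on_compose_snd intro: continuous_on_subset)
  have vanish: "y p = 0" "g p = 0" if "T / 4 \<le> snd p" for p
    using that \<open>0 < T\<close> by (simp_all add: y_def g_def cutoff_eq_0 cutoff_deriv_eq_0)
  have "heat_weak (QT T) y g"
    unfolding y_def[abs_def] g_def[abs_def]
    by (rule heat_weak_time_cutoff[OF Y(2) continuous_on_subset[OF Y(1)]
          cutoff_has_real_derivative[OF \<open>0 < T / 4\<close>] continuous_on_cutoff_deriv[OF \<open>0 < T / 4\<close>]])
       (auto simp: QT_def)
  moreover have "L2_on (QT T) (\<lambda>z. rho lam \<psi> \<theta> s z * y z)" "L2_on (QT T) (\<lambda>z. rho0 lam \<psi> \<theta> s z * g z)"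
    using continuous_on_weights[OF \<theta> \<psi> \<open>0 < T\<close>] vanish
    by (auto intro!: L2_on_QT_vanishing_after continuous_intros cont)
  ultimately have "(y, \<lambda>_. 0) \<in> adm_set \<omega> T lam \<psi> \<theta> s u0"
    unfolding adm_set_def using cont initial boundary by (auto simp: L2_on_def y_def)
  then show ?thesis
    by (simp add: y_def[abs_def])
qed

theorem lemma4:
  fixes \<omega> :: "real set" and T T1 lam :: real and \<psi> u0 :: "real \<Rightarrow> real"
    and \<theta> :: "real \<Rightarrow> real \<Rightarrow> real"
  assumes "open \<omega>" "\<omega> \<noteq> {}" "closure \<omega> \<subseteq> {0<..<1}"
    and "T > 0" and "0 < T1" "T1 < min (1/4) (3 * T / 8)" and "lam \<ge> 1"
    and "psi_adm \<omega> \<psi>"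
    and "H10 u0"
  shows "\<exists>y f. L2_on (QT T) y \<and> L2_on (qT \<omega> T) f
           \<and> (\<forall>s\<ge>0. theta_adm T T1 lam s (\<theta> s) \<longrightarrow> (y, f) \<in> adm_set \<omega> T lam \<psi> (\<theta> s) s u0)"
proof -
  obtain w where w: "continuous_on {0..1} w" "w 0 = 0" "w 1 = 0"
    and u0_ae: "AE x in lebesgue. x \<in> {0<..<1} \<longrightarrow> u0 x = w x"
    using H10_continuous_representative[OF \<open>H10 u0\<close>] by blast
  obtain W B where W: "continuous_on UNIV W" "\<And>x. \<bar>W x\<bar> \<le> B"
    and W_odd: "\<And>x. W (- x) = - W x" "\<And>x. W (1 + x) = - W (1 - x)"
    and W_w: "\<And>x. x \<in> {0..1} \<Longrightarrow> W x = w x"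
    using odd_periodic_extension[OF w] by blast
  have Y: "continuous_on UNIV (heat_flow W)" "heat_weak (UNIV \<times> {0<..}) (heat_flow W) (\<lambda>_. 0)"
    using continuous_on_heat_flow[OF W] heat_weak_heat_flow[OF W] .
  have initial: "AE x in lebesgue. x \<in> {0<..<1} \<longrightarrow> heat_flow W (x, 0) = u0 x"
    using u0_ae by eventually_elim (auto simp: heat_flow_initial W_w)
  have boundary: "heat_flow W (0, t) = 0" "heat_flow W (1, t) = 0" for t
    using W_odd by (auto intro: heat_flow_antisymmetric_point)
  show ?thesis
  proof (intro exI conjI allI impI)
    show "L2_on (QT T) (\<lambda>p. cutoff (T / 4) (snd p) * heat_flow W p)"
      using Y(1) \<open>T > 0\<close> continuous_on_cutoff[of "T / 4"]
      by (intro L2_on_QT_vanishing_after[of "T / 4"])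
         (auto intro!: continuous_intros continuous_on_compose_snd intro: continuous_on_subset
               simp: cutoff_eq_0)
    show "L2_on (qT \<omega> T) (\<lambda>_. 0)"
      by (simp add: L2_on_def)
    show "(\<lambda>p. cutoff (T / 4) (snd p) * heat_flow W p, \<lambda>_. 0) \<in> adm_set \<omega> T lam \<psi> (\<theta> s) s u0"
      if "theta_adm T T1 lam s (\<theta> s)" for s
      using cutoff_mult_in_adm_set[OF that \<open>psi_adm \<omega> \<psi>\<close> \<open>T > 0\<close> Y initial boundary] .
  qed
qed

end
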